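(* Let $\mathbf{P}_1,\mathbf{P}_2\subseteq\mathbb{Z}^n$ be $\mathbb{N}$-generated sets with a non-degenerate intersection. Then for all $\mathbf{p}_1\in\mathbf{P}_1$ and $\mathbf{p}_2\in\mathbf{P}_2$ there exist $\mathbf{p}_1'\in\mathbf{P}_1$ and $\mathbf{p}_2'\in\mathbf{P}_2$ such that $\mathbf{p}_1+\mathbf{p}_1'=\mathbf{p}_2+\mathbf{p}_2'$.
   Context: A set is $\mathbb{N}$-generated if it is the set $\mathbb{N}(\mathbf{G})$ of finite $\mathbb{N}$-linear combinations of some set $\mathbf{G}$. Dimension of $\mathbf{X}\subseteq\mathbb{Q}^n$: least $k$ such that $\mathbf{X}\subseteq\bigcup_{i=1}^r(\mathbf{b}_i+\mathbf{V}_i)$ for finitely many $\mathbf{b}_i\in\mathbb{Q}^n$ and vector subspaces $\mathbf{V}_i$ of dimension $\le k$. $\mathbf{X}_1,\mathbf{X}_2$ have a non-degenerate intersection if $\dim(\mathbf{X}_1\cap\mathbf{X}_2)=\dim(\mathbf{X}_1)=\dim(\mathbf{X}_2)$. *)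

theory Defs
  imports "HOL-Analysis.Analysis"
begin

definition nat_comb :: "(int ^ 'n) set \<Rightarrow> (int ^ 'n) set" where
  "nat_comb G = {x. \<exists>S c. finite S \<and> S \<subseteq> G \<and>
                     x = (\<Sum>g\<in>S. int (c g) *s g)}"

definition N_generated :: "(int ^ 'n) set \<Rightarrow> bool" where
  "N_generated P \<longleftrightarrow> (\<exists>G. P = nat_comb G)"

definition to_rat_vec :: "int ^ 'n \<Rightarrow> rat ^ 'n" where
  "to_rat_vec x = (\<chi> i. of_int (x $ i))"

definition covered_dim :: "(rat ^ 'n) set \<Rightarrow> nat \<Rightarrow> bool" where
  "covered_dim X k \<longleftrightarrow> (\<exists>L :: ((rat ^ 'n) \<times> (rat ^ 'n) set) list.
      (\<forall>(b, V) \<in> set L. vec.subspace V \<and> vec.dim V \<le> k) \<and>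
      X \<subseteq> (\<Union>(b, V) \<in> set L. (\<lambda>v. b + v) ` V))"

definition qdim :: "(rat ^ 'n) set \<Rightarrow> nat" where
  "qdim X = (LEAST k. covered_dim X k)"

definition zdim :: "(int ^ 'n) set \<Rightarrow> nat" where
  "zdim X = qdim (to_rat_vec ` X)"

definition nondegenerate_intersection :: "(int ^ 'n) set \<Rightarrow> (int ^ 'n) set \<Rightarrow> bool" where
  "nondegenerate_intersection X1 X2 \<longleftrightarrow>
     zdim (X1 \<inter> X2) = zdim X1 \<and> zdim X1 = zdim X2"

end

theory Submission
  imports Defs
begin

text \<open>Both sets are submonoids of \<open>\<int>\<^sup>n\<close>. A submonoid \<open>M\<close> of \<open>\<rat>\<^sup>n\<close> covered by finitely many
  affine subspaces already lies in one of their linear parts: if \<open>m \<in> M\<close> escapes one of them,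
  every ray \<open>x + \<nat> m\<close> in \<open>M\<close> meets some other coset twice, so that coset contains the whole
  ray and its linear part contains \<open>m\<close>. Hence the dimension of a submonoid is that of its
  span, and the non-degeneracy hypothesis says that \<open>P\<^sub>1\<close>, \<open>P\<^sub>2\<close> and \<open>P\<^sub>1 \<inter> P\<^sub>2\<close> span the same
  rational space. So \<open>p\<^sub>1 - p\<^sub>2\<close> lies in the span of the submonoid \<open>P\<^sub>1 \<inter> P\<^sub>2\<close>, which means
  \<open>D (p\<^sub>1 - p\<^sub>2) = a - b\<close> for some \<open>D > 0\<close> and \<open>a, b \<in> P\<^sub>1 \<inter> P\<^sub>2\<close>; then
  \<open>p\<^sub>1' = (D - 1) p\<^sub>1 + b\<close> and \<open>p\<^sub>2' = (D - 1) p\<^sub>2 + a\<close> work.\<close>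

definition add_submonoid :: "'a::monoid_add set \<Rightarrow> bool" where
  "add_submonoid M \<longleftrightarrow> 0 \<in> M \<and> (\<forall>x\<in>M. \<forall>y\<in>M. x + y \<in> M)"

lemma add_submonoid_Int:
  "add_submonoid M \<Longrightarrow> add_submonoid N \<Longrightarrow> add_submonoid (M \<inter> N)"
  by (simp add: add_submonoid_def)

lemma add_submonoid_image:
  assumes "add_submonoid M" "f 0 = 0" "\<And>x y. f (x + y) = f x + f y"
  shows "add_submonoid (f ` M)"
  using assms unfolding add_submonoid_def by (metis image_iff)

lemma add_submonoid_scale_of_nat:
  fixes M :: "('a::comm_ring_1 ^ 'n) set"
  assumes "add_submonoid M" "x \<in> M"
  shows "of_nat k *s x \<in> M"
proof (induction k)
  case 0
  then show ?case using assms by (simp add: add_submonoid_def)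
next
  case (Suc k)
  have "of_nat (Suc k) *s x = x + of_nat k *s x"
    by (simp add: vec_eq_iff algebra_simps)
  then show ?case using Suc assms by (simp add: add_submonoid_def)
qed

lemma nat_comb_sum_extend:
  assumes "finite T" "S \<subseteq> T"
  shows "(\<Sum>g\<in>S. int (c g) *s g) = (\<Sum>g\<in>T. int (if g \<in> S then c g else 0) *s g)"
  using assms by (intro sum.mono_neutral_cong_left) auto

lemma add_submonoid_nat_comb: "add_submonoid (nat_comb G)"
  unfolding add_submonoid_def
proof (intro conjI ballI)
  show "0 \<in> nat_comb G"
    unfolding nat_comb_def by (intro CollectI exI[of _ "{}"]) simp
next
  fix x y assume "x \<in> nat_comb G" "y \<in> nat_comb G"
  then obtain S1 c1 S2 c2 where S: "finite S1" "S1 \<subseteq> G" "x = (\<Sum>g\<in>S1. int (c1 g) *s g)"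
    "finite S2" "S2 \<subseteq> G" "y = (\<Sum>g\<in>S2. int (c2 g) *s g)"
    unfolding nat_comb_def by blast
  define c where "c g = (if g \<in> S1 then c1 g else 0) + (if g \<in> S2 then c2 g else 0)" for g
  have "x + y = (\<Sum>g\<in>S1 \<union> S2. int (c g) *s g)"
    using S nat_comb_sum_extend[of "S1 \<union> S2" S1 c1] nat_comb_sum_extend[of "S1 \<union> S2" S2 c2]
    by (simp add: c_def sum.distrib[symmetric] vector_add_ldistrib[symmetric])
  then show "x + y \<in> nat_comb G"
    unfolding nat_comb_def using S by blast
qed

lemma add_submonoid_N_generated: "N_generated P \<Longrightarrow> add_submonoid P"
  unfolding N_generated_def using add_submonoid_nat_comb by blast

lemma to_rat_vec_add [simp]: "to_rat_vec (x + y) = to_rat_vec x + to_rat_vec y"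
  by (simp add: to_rat_vec_def vec_eq_iff)

lemma to_rat_vec_0 [simp]: "to_rat_vec 0 = 0"
  by (simp add: to_rat_vec_def vec_eq_iff)

lemma to_rat_vec_scale_of_nat [simp]: "to_rat_vec (of_nat k *s x) = of_nat k *s to_rat_vec x"
  by (simp add: to_rat_vec_def vec_eq_iff)

lemma to_rat_vec_inject [simp]: "to_rat_vec x = to_rat_vec y \<longleftrightarrow> x = y"
  by (simp add: to_rat_vec_def vec_eq_iff)

lemma add_submonoid_to_rat_vec: "add_submonoid P \<Longrightarrow> add_submonoid (to_rat_vec ` P)"
  by (rule add_submonoid_image) simp_all

lemma nat_seq_pigeonhole:
  assumes "finite I" "\<And>j::nat. \<exists>i\<in>I. P i j"
  shows "\<exists>i\<in>I. \<exists>j k. j \<noteq> k \<and> P i j \<and> P i k"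
proof -
  obtain g where g: "\<And>j. g j \<in> I \<and> P (g j) j"
    using assms(2) by metis
  have "\<not> inj g"
    using g finite_subset[OF _ assms(1), of "range g"] finite_imageD[of g UNIV] by blast
  then obtain j k where "j \<noteq> k" "g j = g k"
    unfolding inj_def by blast
  then show ?thesis using g by metis
qed

lemma coset_containing_two_ray_points:
  fixes x m b :: "'a::field_char_0 ^ 'n"
  assumes V: "vec.subspace V"
    and i: "x + of_nat i *s m \<in> (\<lambda>v. b + v) ` V"
    and j: "x + of_nat j *s m \<in> (\<lambda>v. b + v) ` V"
    and "i \<noteq> j"
  shows "m \<in> V" and "x \<in> (\<lambda>v. b + v) ` V"
proof -
  obtain v w where v: "v \<in> V" "x + of_nat i *s m = b + v"
    and w: "w \<in> V" "x + of_nat j *s m = b + w"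
    using i j by blast
  have "v - w = (x + of_nat i *s m) - (x + of_nat j *s m)"
    using v(2) w(2) by simp
  also have "\<dots> = (of_nat i - of_nat j) *s m"
    by (simp add: vec.scale_left_diff_distrib)
  finally have "(of_nat i - of_nat j :: 'a) *s m \<in> V"
    using V v(1) w(1) by (metis vec.subspace_diff)
  then have "inverse (of_nat i - of_nat j :: 'a) *s ((of_nat i - of_nat j) *s m) \<in> V"
    by (rule vec.subspace_scale[OF V])
  then show m: "m \<in> V"
    using \<open>i \<noteq> j\<close> by (simp only: vector_smult_assoc) simp
  have "x = b + (v - of_nat i *s m)"
    using v(2) by (metis add_diff_cancel_right' add_diff_eq)
  moreover have "v - of_nat i *s m \<in> V"
    using V v(1) m by (simp add: vec.subspace_diff vec.subspace_scale)
  ultimately show "x \<in> (\<lambda>v. b + v) ` V" by blast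
qed

lemma add_submonoid_subset_subspace_of_cover:
  fixes M :: "('a::field_char_0 ^ 'n) set"
  assumes M: "add_submonoid M"
  shows "\<forall>(b, V)\<in>set L. vec.subspace V \<Longrightarrow> M \<subseteq> (\<Union>(b, V)\<in>set L. (\<lambda>v. b + v) ` V) \<Longrightarrow>
    \<exists>(b, V)\<in>set L. M \<subseteq> V"
proof (induction L)
  case Nil
  then show ?case using M by (auto simp: add_submonoid_def)
next
  case (Cons bV L)
  obtain b V where bV: "bV = (b, V)" by force
  show ?case
  proof (cases "M \<subseteq> V")
    case True
    then show ?thesis using bV by auto
  next
    case False
    then obtain m where m: "m \<in> M" "m \<notin> V" by blast
    have "x \<in> (\<Union>(b, V)\<in>set L. (\<lambda>v. b + v) ` V)" if x: "x \<in> M" for x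
    proof -
      have "x + of_nat j *s m \<in> M" for j
        using M x add_submonoid_scale_of_nat[OF M m(1)] by (simp add: add_submonoid_def)
      then have "\<exists>c\<in>set (bV # L). x + of_nat j *s m \<in> (case c of (b, V) \<Rightarrow> (\<lambda>v. b + v) ` V)" for j
        using Cons.prems(2) by (simp only: UN_iff subset_iff)
      then have "\<exists>c\<in>set (bV # L). \<exists>i j. i \<noteq> j \<and>
          x + of_nat i *s m \<in> (case c of (b, V) \<Rightarrow> (\<lambda>v. b + v) ` V) \<and>
          x + of_nat j *s m \<in> (case c of (b, V) \<Rightarrow> (\<lambda>v. b + v) ` V)"
        by (intro nat_seq_pigeonhole finite_set)
      then obtain c i j where c: "c \<in> set (bV # L)" "i \<noteq> j"
        "x + of_nat i *s m \<in> (case c of (b, V) \<Rightarrow> (\<lambda>v. b + v) ` V)"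
        "x + of_nat j *s m \<in> (case c of (b, V) \<Rightarrow> (\<lambda>v. b + v) ` V)"
        by blast
      obtain b' V' where c_eq: "c = (b', V')" by force
      have "vec.subspace V'"
        using Cons.prems(1) c(1) c_eq by auto
      from coset_containing_two_ray_points[OF this c(3,4,2)[unfolded c_eq case_prod_conv]]
      have "m \<in> V'" "x \<in> (\<lambda>v. b' + v) ` V'" .
      moreover from this(1) have "(b', V') \<in> set L"
        using c(1) c_eq bV m(2) by auto
      ultimately show ?thesis by blast
    qed
    then show ?thesis
      using Cons.IH Cons.prems(1) by fastforce
  qed
qed

lemma covered_dim_dim: "covered_dim (M :: (rat ^ 'n) set) (vec.dim M)"
  unfolding covered_dim_def
  by (rule exI[of _ "[(0, vec.span M)]"]) (auto simp: vec.span_base)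

lemma dim_le_if_covered_dim:
  fixes M :: "(rat ^ 'n) set"
  assumes "add_submonoid M" "covered_dim M k"
  shows "vec.dim M \<le> k"
proof -
  obtain L :: "((rat ^ 'n) \<times> (rat ^ 'n) set) list" where
    L: "\<forall>(b, V)\<in>set L. vec.subspace V \<and> vec.dim V \<le> k"
       "M \<subseteq> (\<Union>(b, V)\<in>set L. (\<lambda>v. b + v) ` V)"
    using assms(2) unfolding covered_dim_def by blast
  then obtain b V where "(b, V) \<in> set L" "M \<subseteq> V"
    using add_submonoid_subset_subspace_of_cover[OF assms(1), of L] by fastforce
  then show ?thesis
    using L(1) vec.dim_subset[of M V] by fastforce
qed

lemma qdim_add_submonoid:
  fixes M :: "(rat ^ 'n) set"
  assumes "add_submonoid M"
  shows "qdim M = vec.dim M"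
  unfolding qdim_def
  by (rule Least_equality[of "covered_dim M", OF covered_dim_dim dim_le_if_covered_dim[OF assms]])

lemma span_add_submonoid_multiple_diff:
  fixes M :: "(rat ^ 'n) set"
  assumes M: "add_submonoid M" and v: "v \<in> vec.span M"
  shows "\<exists>D>0. \<exists>a\<in>M. \<exists>b\<in>M. of_nat D *s v = a - b"
proof -
  let ?S = "{v. \<exists>D>0. \<exists>a\<in>M. \<exists>b\<in>M. of_nat D *s v = a - b}"
  have M0: "0 \<in> M" and Madd: "\<And>x y. x \<in> M \<Longrightarrow> y \<in> M \<Longrightarrow> x + y \<in> M"
    using M by (auto simp: add_submonoid_def)
  have "M \<subseteq> ?S"
    using M0 by (force intro: exI[of _ 1])
  moreover have "vec.subspace ?S"
    unfolding vec.subspace_def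
  proof (intro conjI ballI allI impI)
    show "0 \<in> ?S" using M0 by (force intro: exI[of _ 1])
  next
    fix x y assume "x \<in> ?S" "y \<in> ?S"
    then obtain D a b E a' b' where "D > 0" "a \<in> M" "b \<in> M" "of_nat D *s x = a - b"
      "E > 0" "a' \<in> M" "b' \<in> M" and y: "of_nat E *s y = a' - b'"
      by blast
    have "of_nat (D * E) *s (x + y) = of_nat E *s (of_nat D *s x) + of_nat D *s (of_nat E *s y)"
      by (simp add: vec_eq_iff algebra_simps)
    also have "\<dots> = (of_nat E *s a + of_nat D *s a') - (of_nat E *s b + of_nat D *s b')"
      unfolding \<open>of_nat D *s x = a - b\<close> y by (simp add: vec.scale_right_diff_distrib)
    finally have "of_nat (D * E) *s (x + y) =
        (of_nat E *s a + of_nat D *s a') - (of_nat E *s b + of_nat D *s b')" .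
    then show "x + y \<in> ?S"
      using \<open>D > 0\<close> \<open>E > 0\<close> \<open>a \<in> M\<close> \<open>b \<in> M\<close> \<open>a' \<in> M\<close> \<open>b' \<in> M\<close>
      by (intro CollectI exI[of _ "D * E"]) (auto intro!: Madd add_submonoid_scale_of_nat[OF M])
  next
    fix c :: rat and x assume "x \<in> ?S"
    then obtain D a b where D: "D > 0" "a \<in> M" "b \<in> M" "of_nat D *s x = a - b"
      by blast
    obtain p q where pq: "quotient_of c = (p, q)" by force
    have q: "q > 0" and c: "c = of_int p / of_int q"
      using quotient_of_denom_pos[OF pq] quotient_of_div[OF pq] by simp_all
    have scaled: "of_nat (nat q * D) *s (c *s x) = of_int p *s (a - b)"
      using q D(4)[symmetric] by (simp add: c vec_eq_iff field_simps)
    have "of_nat (nat q * D) *s (c *s x) = of_nat (nat p) *s a - of_nat (nat p) *s b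
        \<or> of_nat (nat q * D) *s (c *s x) = of_nat (nat (- p)) *s b - of_nat (nat (- p)) *s a"
      unfolding scaled by (cases "p \<ge> 0") (simp_all add: vec_eq_iff algebra_simps)
    then show "c *s x \<in> ?S"
      using q D add_submonoid_scale_of_nat[OF M] by (intro CollectI exI[of _ "nat q * D"]) fastforce
  qed
  ultimately show ?thesis
    using v vec.span_minimal by blast
qed

lemma zdim_add_submonoid: "add_submonoid P \<Longrightarrow> zdim P = vec.dim (to_rat_vec ` P)"
  unfolding zdim_def by (intro qdim_add_submonoid add_submonoid_to_rat_vec)

lemma span_Int_eq_if_nondegenerate_intersection:
  assumes P1: "add_submonoid P1" and P2: "add_submonoid P2"
    and "nondegenerate_intersection P1 P2"
  shows "vec.span (to_rat_vec ` (P1 \<inter> P2)) = vec.span (to_rat_vec ` P1)"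
    and "vec.span (to_rat_vec ` (P1 \<inter> P2)) = vec.span (to_rat_vec ` P2)"
proof -
  have d1: "vec.dim (to_rat_vec ` (P1 \<inter> P2)) = vec.dim (to_rat_vec ` P1)"
    and d2: "vec.dim (to_rat_vec ` P1) = vec.dim (to_rat_vec ` P2)"
    using assms(3) add_submonoid_Int[OF P1 P2]
    by (simp_all add: nondegenerate_intersection_def zdim_add_submonoid P1 P2)
  show "vec.span (to_rat_vec ` (P1 \<inter> P2)) = vec.span (to_rat_vec ` P1)"
    by (rule vec.dim_eq_span) (auto simp: d1)
  show "vec.span (to_rat_vec ` (P1 \<inter> P2)) = vec.span (to_rat_vec ` P2)"
    by (rule vec.dim_eq_span) (auto simp: d1 d2)
qed

lemma common_extension_of_multiple:
  fixes p1 p2 a b :: "'a::comm_ring_1 ^ 'n"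
  assumes P1: "add_submonoid P1" and P2: "add_submonoid P2"
    and "p1 \<in> P1" "p2 \<in> P2" "a \<in> P1 \<inter> P2" "b \<in> P1 \<inter> P2" "D > 0"
    and eq: "of_nat D *s p1 + b = of_nat D *s p2 + a"
  shows "\<exists>p1'\<in>P1. \<exists>p2'\<in>P2. p1 + p1' = p2 + p2'"
proof -
  obtain E where E: "D = Suc E" using \<open>D > 0\<close> gr0_implies_Suc by blast
  have "p1 + (of_nat E *s p1 + b) = p2 + (of_nat E *s p2 + a)"
    using eq unfolding E by (simp add: vec_eq_iff algebra_simps)
  moreover have "of_nat E *s p1 + b \<in> P1" "of_nat E *s p2 + a \<in> P2"
    using assms add_submonoid_scale_of_nat[OF P1] add_submonoid_scale_of_nat[OF P2]
    by (auto simp: add_submonoid_def)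
  ultimately show ?thesis by blast
qed

theorem mainTheorem19:
  fixes P1 P2 :: "(int ^ 'n) set"
  assumes "N_generated P1" and "N_generated P2"
    and "nondegenerate_intersection P1 P2"
  shows "\<forall>p1\<in>P1. \<forall>p2\<in>P2. \<exists>p1'\<in>P1. \<exists>p2'\<in>P2. p1 + p1' = p2 + p2'"
proof (intro ballI)
  fix p1 p2 assume p1: "p1 \<in> P1" and p2: "p2 \<in> P2"
  have P1: "add_submonoid P1" and P2: "add_submonoid P2"
    using assms(1,2) by (simp_all add: add_submonoid_N_generated)
  let ?C = "to_rat_vec ` (P1 \<inter> P2)"
  have "to_rat_vec p1 \<in> vec.span ?C" "to_rat_vec p2 \<in> vec.span ?C"
    using span_Int_eq_if_nondegenerate_intersection[OF P1 P2 assms(3)] p1 p2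
    by (auto intro: vec.span_base)
  then have "to_rat_vec p1 - to_rat_vec p2 \<in> vec.span ?C"
    by (rule vec.span_diff)
  then obtain D a b where "D > 0" "a \<in> P1 \<inter> P2" "b \<in> P1 \<inter> P2"
    and "of_nat D *s (to_rat_vec p1 - to_rat_vec p2) = to_rat_vec a - to_rat_vec b"
    using span_add_submonoid_multiple_diff[OF add_submonoid_to_rat_vec[OF add_submonoid_Int[OF P1 P2]]]
    by blast
  moreover from this(4) have "of_nat D *s p1 + b = of_nat D *s p2 + a"
    by (simp flip: to_rat_vec_inject add: vec.scale_right_diff_distrib algebra_simps)
  ultimately show "\<exists>p1'\<in>P1. \<exists>p2'\<in>P2. p1 + p1' = p2 + p2'"
    using common_extension_of_multiple[OF P1 P2 p1 p2] by simp
qed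

end
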